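(* Let $(X_\lambda)_{\lambda\in\Lambda}$ be a family of topological spaces such that $C(X_{\lambda_0})$ has the countable sup property for some $\lambda_0\in\Lambda$ and $X_\lambda$ has calibre $\aleph_1$ for every $\lambda\in\Lambda\setminus\{\lambda_0\}$. Then $C(\prod_{\lambda\in\Lambda}X_\lambda)$ has the countable sup property.
   Context: Products carry the product topology. $C(Z)$ is the vector lattice of real-valued continuous functions on $Z$ with the pointwise order. A vector lattice has the countable sup property if every nonempty subset possessing a supremum contains a countable subset with the same supremum. A space has calibre $\aleph_1$ if every uncountable family of nonempty open subsets contains an uncountable subfamily with nonempty intersection. *)

theory Defs
  imports "HOL-Analysis.Analysis"
begin

text \<open>The vector lattice C(X) of real-valued continuous functions on X.  Elements are
  represented canonically by functions that vanish outside the topological space.\<close>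
definition cont_funs :: "'a topology \<Rightarrow> ('a \<Rightarrow> real) set" where
  "cont_funs X = {f. continuous_map X euclideanreal f \<and> (\<forall>x. x \<notin> topspace X \<longrightarrow> f x = 0)}"

definition le_C :: "'a topology \<Rightarrow> ('a \<Rightarrow> real) \<Rightarrow> ('a \<Rightarrow> real) \<Rightarrow> bool" where
  "le_C X f g \<longleftrightarrow> (\<forall>x\<in>topspace X. f x \<le> g x)"

definition is_sup_C :: "'a topology \<Rightarrow> ('a \<Rightarrow> real) set \<Rightarrow> ('a \<Rightarrow> real) \<Rightarrow> bool" where
  "is_sup_C X F s \<longleftrightarrow> s \<in> cont_funs X \<and> (\<forall>g\<in>F. le_C X g s) \<and>
     (\<forall>h\<in>cont_funs X. (\<forall>g\<in>F. le_C X g h) \<longrightarrow> le_C X s h)"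

definition countable_sup_property :: "'a topology \<Rightarrow> bool" where
  "countable_sup_property X \<longleftrightarrow>
     (\<forall>F s. F \<subseteq> cont_funs X \<and> F \<noteq> {} \<and> is_sup_C X F s \<longrightarrow>
        (\<exists>G\<subseteq>F. countable G \<and> is_sup_C X G s))"

definition calibre_aleph1 :: "'a topology \<Rightarrow> bool" where
  "calibre_aleph1 X \<longleftrightarrow>
     (\<forall>\<U>. \<U> \<subseteq> {U. openin X U \<and> U \<noteq> {}} \<and> uncountable \<U> \<longrightarrow>
        (\<exists>\<V>\<subseteq>\<U>. uncountable \<V> \<and> \<Inter>\<V> \<noteq> {}))"

end

theory Submission
  imports Defs
begin

text \<open>C(X) has the countable sup property exactly when X has the countable chain condition for
  cozero sets: a supremum in C(X) is detected by approximation from below on every nonempty cozero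
  set, and in a ccc space countably many maximal disjoint families of such sets already witness it.

  In the product every nonempty cozero set contains a basic box with finite support. Given
  uncountably many pairwise disjoint ones, a Delta-system argument with the calibre of the factors
  other than \<open>X l0\<close> yields an uncountable subfamily and a point \<open>q\<close> whose coordinates off
  \<open>l0\<close> lie in all of their boxes. Freezing those coordinates at \<open>q\<close> pulls the subfamily back to
  an uncountable disjoint family of nonempty cozero sets of \<open>X l0\<close>.\<close>

definition cozero :: "'a topology \<Rightarrow> ('a \<Rightarrow> real) \<Rightarrow> 'a set" where
  "cozero X h = {x \<in> topspace X. h x > 0}"

definition cozero_set :: "'a topology \<Rightarrow> 'a set \<Rightarrow> bool" where
  "cozero_set X W \<longleftrightarrow> (\<exists>h. continuous_map X euclideanreal h \<and> W = cozero X h)"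

definition ccc_cozero :: "'a topology \<Rightarrow> bool" where
  "ccc_cozero X \<longleftrightarrow>
     (\<forall>\<W>. (\<forall>W\<in>\<W>. cozero_set X W \<and> W \<noteq> {}) \<and> pairwise disjnt \<W> \<longrightarrow> countable \<W>)"

lemma cozero_set_cozero: "continuous_map X euclideanreal h \<Longrightarrow> cozero_set X (cozero X h)"
  unfolding cozero_set_def by blast

lemma cozero_set_subset_topspace: "cozero_set X W \<Longrightarrow> W \<subseteq> topspace X"
  by (auto simp: cozero_set_def cozero_def)

lemma openin_cozero_set:
  assumes "cozero_set X W"
  shows "openin X W"
proof -
  obtain h where h: "continuous_map X euclideanreal h" and W: "W = cozero X h"
    using assms unfolding cozero_set_def by blast
  have "openin X {x \<in> topspace X. h x \<in> {0<..}}"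
    by (rule openin_continuous_map_preimage[OF h]) simp
  then show ?thesis by (simp add: W cozero_def)
qed

lemma cozero_set_less:
  assumes "continuous_map X euclideanreal f" "continuous_map X euclideanreal g"
  shows "cozero_set X {x \<in> topspace X. f x < g x}"
proof -
  have "{x \<in> topspace X. f x < g x} = cozero X (\<lambda>x. g x - f x)"
    by (auto simp: cozero_def)
  then show ?thesis
    using assms by (metis cozero_set_cozero continuous_map_diff)
qed

lemma cozero_set_Int:
  assumes "cozero_set X A" "cozero_set X B"
  shows "cozero_set X (A \<inter> B)"
proof -
  obtain h k where "continuous_map X euclideanreal h" "A = cozero X h"
    "continuous_map X euclideanreal k" "B = cozero X k"
    using assms unfolding cozero_set_def by blast
  then have "continuous_map X euclideanreal (\<lambda>x. min (h x) (k x))" "A \<inter> B = cozero X (\<lambda>x. min (h x) (k x))"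
    by (auto simp: cozero_def intro: continuous_map_real_min)
  then show ?thesis
    using cozero_set_cozero by metis
qed

lemma cozero_set_preimage:
  assumes f: "continuous_map X Y f" and "cozero_set Y W"
  shows "cozero_set X {x \<in> topspace X. f x \<in> W}"
proof -
  obtain h where h: "continuous_map Y euclideanreal h" and W: "W = cozero Y h"
    using assms(2) unfolding cozero_set_def by blast
  have "{x \<in> topspace X. f x \<in> W} = cozero X (h \<circ> f)"
    using continuous_map_image_subset_topspace[OF f] by (auto simp: W cozero_def)
  then show ?thesis
    using cozero_set_cozero continuous_map_compose[OF f h] by metis
qed

definition approximates_below :: "'a topology \<Rightarrow> ('a \<Rightarrow> real) set \<Rightarrow> ('a \<Rightarrow> real) \<Rightarrow> bool" where
  "approximates_below X G s \<longleftrightarrow>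
     (\<forall>e>0. \<forall>W. cozero_set X W \<and> W \<noteq> {} \<longrightarrow> (\<exists>g\<in>G. \<exists>x\<in>W. s x - e < g x))"

lemma is_sup_C_approximates_below:
  assumes sup: "is_sup_C X G s"
  shows "approximates_below X G s"
  unfolding approximates_below_def
proof (intro allI impI, rule ccontr)
  fix e :: real and W
  assume e: "e > 0" and W: "cozero_set X W \<and> W \<noteq> {}" and no: "\<not> (\<exists>g\<in>G. \<exists>x\<in>W. s x - e < g x)"
  obtain k where k: "continuous_map X euclideanreal k" and Wk: "W = cozero X k"
    using W unfolding cozero_set_def by blast
  have s: "s \<in> cont_funs X" and le: "\<forall>g\<in>G. le_C X g s"
    using sup by (auto simp: is_sup_C_def)
  text \<open>Lower \<open>s\<close> by up to \<open>e\<close> on \<open>W\<close>: still an upper bound of \<open>G\<close>, but not above \<open>s\<close>.\<close>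
  define h where "h x = (if x \<in> topspace X then s x - max 0 (min (k x) e) else 0)" for x
  have "continuous_map X euclideanreal (\<lambda>x. s x - max 0 (min (k x) e))"
    using s k by (intro continuous_intros) (auto simp: cont_funs_def)
  then have "h \<in> cont_funs X"
    by (auto simp: cont_funs_def h_def elim: continuous_map_eq)
  moreover have "le_C X g h" if g: "g \<in> G" for g
    unfolding le_C_def
  proof
    fix x assume x: "x \<in> topspace X"
    show "g x \<le> h x"
    proof (cases "x \<in> W")
      case True
      then show ?thesis using no g x e by (force simp: h_def)
    next
      case False
      then show ?thesis using le g x Wk by (auto simp: h_def le_C_def cozero_def)
    qed
  qed
  ultimately have "le_C X s h"
    using sup by (simp add: is_sup_C_def)
  moreover obtain x0 where "x0 \<in> W" using W by blast
  ultimately show False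
    using e Wk by (auto simp: le_C_def h_def cozero_def)
qed

lemma is_sup_C_if_approximates_below:
  assumes s: "s \<in> cont_funs X" and le: "\<forall>g\<in>G. le_C X g s" and approx: "approximates_below X G s"
  shows "is_sup_C X G s"
  unfolding is_sup_C_def
proof (intro conjI ballI impI s)
  show "\<And>g. g \<in> G \<Longrightarrow> le_C X g s" using le by blast
  fix h assume h: "h \<in> cont_funs X" and ub: "\<forall>g\<in>G. le_C X g h"
  show "le_C X s h"
    unfolding le_C_def
  proof (rule ballI, rule ccontr)
    fix x0 assume x0: "x0 \<in> topspace X" and gap: "\<not> s x0 \<le> h x0"
    define e where "e = (s x0 - h x0) / 2"
    have e: "e > 0" using gap by (simp add: e_def)
    define W where "W = {x \<in> topspace X. h x + e < s x}"
    have "cozero_set X W"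
      unfolding W_def using s h by (intro cozero_set_less continuous_intros) (auto simp: cont_funs_def)
    moreover have "x0 \<in> W" using x0 gap by (auto simp: W_def e_def field_simps)
    ultimately obtain g x where "g \<in> G" "x \<in> W" "s x - e < g x"
      using approx e unfolding approximates_below_def by blast
    moreover have "g x \<le> h x" using ub \<open>g \<in> G\<close> \<open>x \<in> W\<close> by (auto simp: le_C_def W_def)
    ultimately show False by (simp add: W_def)
  qed
qed

lemma maximal_pairwise_subset:
  assumes "symp R"
  shows "\<exists>M\<subseteq>A. pairwise R M \<and> (\<forall>z\<in>A - M. \<exists>y\<in>M. \<not> R z y)"
proof -
  define \<P> where "\<P> = {M. M \<subseteq> A \<and> pairwise R M}"
  have "\<Union>\<C> \<in> \<P>" if "subset.chain \<P> \<C>" for \<C>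
  proof -
    have "chain\<^sub>\<subseteq> \<C>" "\<C> \<subseteq> \<P>"
      using that by (auto simp: subset_chain_def chain_subset_def)
    then show ?thesis
      using pairwise_chain_Union[of \<C> R] by (auto simp: \<P>_def)
  qed
  then have "\<exists>M\<in>\<P>. \<forall>N\<in>\<P>. M \<subseteq> N \<longrightarrow> N = M"
    by (rule subset_Zorn')
  then obtain M where "M \<in> \<P>" and max: "\<forall>N\<in>\<P>. M \<subseteq> N \<longrightarrow> N = M"
    by blast
  then have M: "M \<subseteq> A" "pairwise R M"
    by (auto simp: \<P>_def)
  have "\<exists>y\<in>M. \<not> R z y" if z: "z \<in> A - M" for z
  proof (rule ccontr)
    assume "\<not> (\<exists>y\<in>M. \<not> R z y)"
    then have "\<forall>y\<in>M. R z y \<and> R y z"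
      using \<open>symp R\<close> by (meson sympD)
    then have "insert z M \<in> \<P>"
      using M z by (simp add: \<P>_def pairwise_insert)
    then have "insert z M = M"
      using max by blast
    with z show False by blast
  qed
  with M show ?thesis by blast
qed

lemma ccc_cozero_countable_meeting_subfamily:
  assumes "ccc_cozero X" and "\<forall>W\<in>\<A>. cozero_set X W \<and> W \<noteq> {}"
  shows "\<exists>\<M>\<subseteq>\<A>. countable \<M> \<and> (\<forall>W\<in>\<A>. \<exists>Y\<in>\<M>. W \<inter> Y \<noteq> {})"
proof -
  obtain \<M> where \<M>: "\<M> \<subseteq> \<A>" "pairwise disjnt \<M>" and max: "\<forall>W\<in>\<A> - \<M>. \<exists>Y\<in>\<M>. \<not> disjnt W Y"
    using maximal_pairwise_subset[of disjnt \<A>] sympI[of disjnt, OF disjnt_sym] by blast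
  have "countable \<M>"
    using assms \<M> unfolding ccc_cozero_def by blast
  moreover have "\<exists>Y\<in>\<M>. W \<inter> Y \<noteq> {}" if "W \<in> \<A>" for W
  proof (cases "W \<in> \<M>")
    case True
    then show ?thesis using that assms(2) by (metis Int_absorb)
  next
    case False
    then show ?thesis using that max by (auto simp: disjnt_def)
  qed
  ultimately show ?thesis using \<M>(1) by blast
qed

lemma approximates_below_on_cozero_subset:
  assumes approx: "approximates_below X F s" and F: "F \<subseteq> cont_funs X" and s: "s \<in> cont_funs X"
    and W: "cozero_set X W" "W \<noteq> {}" and e: "e > 0"
  shows "\<exists>f\<in>F. \<exists>W'\<subseteq>W. cozero_set X W' \<and> W' \<noteq> {} \<and> (\<forall>x\<in>W'. s x - e < f x)"
proof -
  obtain f x where f: "f \<in> F" and x: "x \<in> W" "s x - e < f x"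
    using approx W e unfolding approximates_below_def by blast
  define W' where "W' = W \<inter> {y \<in> topspace X. s y - e < f y}"
  have "cozero_set X W'"
    unfolding W'_def using W f F s
    by (intro cozero_set_Int cozero_set_less continuous_intros) (auto simp: cont_funs_def)
  moreover have "x \<in> W'"
    using x cozero_set_subset_topspace[OF W(1)] by (auto simp: W'_def)
  ultimately show ?thesis
    using f by (intro bexI[of _ f] exI[of _ W']) (auto simp: W'_def)
qed

lemma ccc_cozero_countable_approximating_subset:
  assumes ccc: "ccc_cozero X" and approx: "approximates_below X F s"
    and F: "F \<subseteq> cont_funs X" and s: "s \<in> cont_funs X"
  shows "\<exists>G\<subseteq>F. countable G \<and> approximates_below X G s"
proof -
  define \<A> where "\<A> n = {W. cozero_set X W \<and> W \<noteq> {} \<and> (\<exists>f\<in>F. \<forall>x\<in>W. s x - 1 / Suc n < f x)}" for n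
  have "\<forall>n. \<exists>\<M>\<subseteq>\<A> n. countable \<M> \<and> (\<forall>W\<in>\<A> n. \<exists>Y\<in>\<M>. W \<inter> Y \<noteq> {})"
    by (intro allI ccc_cozero_countable_meeting_subfamily[OF ccc]) (auto simp: \<A>_def)
  then obtain \<M> where \<M>: "\<And>n. \<M> n \<subseteq> \<A> n" "\<And>n. countable (\<M> n)"
    and meets: "\<And>n W. W \<in> \<A> n \<Longrightarrow> \<exists>Y\<in>\<M> n. W \<inter> Y \<noteq> {}"
    by metis
  have "\<forall>n. \<forall>Y\<in>\<M> n. \<exists>g\<in>F. \<forall>x\<in>Y. s x - 1 / Suc n < g x"
    using \<M>(1) unfolding \<A>_def by blast
  then obtain f where f: "\<And>n Y. Y \<in> \<M> n \<Longrightarrow> f n Y \<in> F \<and> (\<forall>x\<in>Y. s x - 1 / Suc n < f n Y x)"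
    by metis
  define G where "G = (\<Union>n. f n ` \<M> n)"
  have "approximates_below X G s"
    unfolding approximates_below_def
  proof (intro allI impI)
    fix e :: real and W assume e: "e > 0" and W: "cozero_set X W \<and> W \<noteq> {}"
    obtain n where n: "1 / Suc n < e" using reals_Archimedean[OF e] by (auto simp: inverse_eq_divide)
    have "\<exists>g\<in>F. \<exists>W'\<subseteq>W. cozero_set X W' \<and> W' \<noteq> {} \<and> (\<forall>x\<in>W'. s x - 1 / Suc n < g x)"
      using W by (intro approximates_below_on_cozero_subset[OF approx F s]) auto
    then obtain g W' where "g \<in> F" "W' \<subseteq> W" "cozero_set X W'" "W' \<noteq> {}"
      "\<forall>x\<in>W'. s x - 1 / Suc n < g x"
      by blast
    then have "W' \<in> \<A> n" "W' \<subseteq> W"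
      unfolding \<A>_def by blast+
    then obtain Y z where Y: "Y \<in> \<M> n" and z: "z \<in> W" "z \<in> Y" using meets by blast
    have "f n Y \<in> G" using Y by (auto simp: G_def)
    moreover have "s z - e < f n Y z" using f[OF Y] z(2) n by fastforce
    ultimately show "\<exists>g\<in>G. \<exists>x\<in>W. s x - e < g x" using z(1) by blast
  qed
  moreover have "G \<subseteq> F" "countable G"
    using f \<M>(2) by (auto simp: G_def)
  ultimately show ?thesis by blast
qed

lemma countable_sup_property_if_ccc_cozero:
  assumes ccc: "ccc_cozero X"
  shows "countable_sup_property X"
  unfolding countable_sup_property_def
proof (intro allI impI)
  fix F s assume "F \<subseteq> cont_funs X \<and> F \<noteq> {} \<and> is_sup_C X F s"
  then have F: "F \<subseteq> cont_funs X" and sup: "is_sup_C X F s" by auto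
  have s: "s \<in> cont_funs X" and le: "\<forall>f\<in>F. le_C X f s"
    using sup by (auto simp: is_sup_C_def)
  obtain G where "G \<subseteq> F" "countable G" "approximates_below X G s"
    using ccc_cozero_countable_approximating_subset[OF ccc is_sup_C_approximates_below[OF sup] F s]
    by blast
  moreover from this(1) have "is_sup_C X G s"
    using le s \<open>approximates_below X G s\<close> by (intro is_sup_C_if_approximates_below) auto
  ultimately show "\<exists>G\<subseteq>F. countable G \<and> is_sup_C X G s" by blast
qed

definition cutoff :: "'a topology \<Rightarrow> ('a \<Rightarrow> real) \<Rightarrow> nat \<Rightarrow> 'a \<Rightarrow> real" where
  "cutoff X h n x = (if x \<in> topspace X then min 1 (real n * max 0 (h x)) else 0)"

lemma cutoff_in_cont_funs:
  assumes "continuous_map X euclideanreal h"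
  shows "cutoff X h n \<in> cont_funs X"
proof -
  have "continuous_map X euclideanreal (\<lambda>x. min 1 (real n * max 0 (h x)))"
    using assms by (intro continuous_intros)
  then show ?thesis
    by (auto simp: cont_funs_def cutoff_def elim: continuous_map_eq)
qed

lemma indicator_topspace_in_cont_funs: "(indicator (topspace X) :: 'a \<Rightarrow> real) \<in> cont_funs X"
proof -
  have "continuous_map X euclideanreal (indicator (topspace X) :: 'a \<Rightarrow> real)"
    by (rule continuous_map_eq[of _ _ "\<lambda>x. 1"]) simp_all
  then show ?thesis
    by (simp add: cont_funs_def)
qed

lemma is_sup_C_cutoffs:
  assumes H: "\<And>h. h \<in> H \<Longrightarrow> continuous_map X euclideanreal h"
    and meets: "\<And>V. cozero_set X V \<Longrightarrow> V \<noteq> {} \<Longrightarrow> \<exists>h\<in>H. V \<inter> cozero X h \<noteq> {}"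
  shows "is_sup_C X ((\<lambda>(h, n). cutoff X h n) ` (H \<times> UNIV)) (indicator (topspace X))"
proof (rule is_sup_C_if_approximates_below[OF indicator_topspace_in_cont_funs])
  show "\<forall>g\<in>(\<lambda>(h, n). cutoff X h n) ` (H \<times> UNIV). le_C X g (indicator (topspace X))"
    by (auto simp: le_C_def cutoff_def)
  show "approximates_below X ((\<lambda>(h, n). cutoff X h n) ` (H \<times> UNIV)) (indicator (topspace X))"
    unfolding approximates_below_def
  proof (intro allI impI)
    fix e :: real and V assume e: "e > 0" and V: "cozero_set X V \<and> V \<noteq> {}"
    then obtain h x where h: "h \<in> H" and x: "x \<in> V" "x \<in> cozero X h"
      using meets by blast
    then have "x \<in> topspace X" "h x > 0" by (auto simp: cozero_def)
    then obtain n where "1 < real n * h x" using ex_less_of_nat_mult by blast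
    then have "cutoff X h n x = 1" using \<open>x \<in> topspace X\<close> \<open>h x > 0\<close> by (simp add: cutoff_def)
    moreover have "cutoff X h n \<in> (\<lambda>(h, n). cutoff X h n) ` (H \<times> UNIV)"
      using h by (auto intro: rev_image_eqI[of "(h, n)"])
    ultimately show "\<exists>g\<in>(\<lambda>(h, n). cutoff X h n) ` (H \<times> UNIV). \<exists>x\<in>V. indicator (topspace X) x - e < g x"
      using x e \<open>x \<in> topspace X\<close> by (intro bexI[of _ "cutoff X h n"] bexI[of _ x]) auto
  qed
qed

definition adapted_funs :: "'a topology \<Rightarrow> 'a set set \<Rightarrow> ('a \<Rightarrow> real) set" where
  "adapted_funs X \<W> = {h. continuous_map X euclideanreal h \<and>
     (cozero X h \<in> \<W> \<or> (\<forall>W\<in>\<W>. disjnt (cozero X h) W))}"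

lemma is_sup_C_cutoffs_adapted_funs:
  assumes cz: "\<And>W. W \<in> \<W> \<Longrightarrow> cozero_set X W"
  shows "is_sup_C X ((\<lambda>(h, n). cutoff X h n) ` (adapted_funs X \<W> \<times> UNIV)) (indicator (topspace X))"
proof (rule is_sup_C_cutoffs)
  fix V assume V: "cozero_set X V" "V \<noteq> {}"
  show "\<exists>h\<in>adapted_funs X \<W>. V \<inter> cozero X h \<noteq> {}"
  proof (cases "\<exists>W\<in>\<W>. V \<inter> W \<noteq> {}")
    case True
    then obtain W where "W \<in> \<W>" "V \<inter> W \<noteq> {}" by blast
    moreover obtain h where "continuous_map X euclideanreal h" "W = cozero X h"
      using cz[OF \<open>W \<in> \<W>\<close>] unfolding cozero_set_def by blast
    ultimately show ?thesis by (auto simp: adapted_funs_def)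
  next
    case False
    obtain k where "continuous_map X euclideanreal k" "V = cozero X k"
      using V(1) unfolding cozero_set_def by blast
    then have "k \<in> adapted_funs X \<W>" using False by (auto simp: adapted_funs_def disjnt_def)
    then show ?thesis using V(2) \<open>V = cozero X k\<close> by blast
  qed
qed (simp add: adapted_funs_def)

lemma approximating_adapted_cutoffs_generate:
  assumes disj: "pairwise disjnt \<W>" and W0: "W0 \<in> \<W>" "cozero_set X W0" "W0 \<noteq> {}"
    and P: "P \<subseteq> adapted_funs X \<W> \<times> UNIV"
    and approx: "approximates_below X ((\<lambda>(h, n). cutoff X h n) ` P) (indicator (topspace X))"
  shows "W0 \<in> (\<lambda>p. cozero X (fst p)) ` P"
proof -
  have "(1/2 :: real) > 0" by simp
  then obtain g x where "g \<in> (\<lambda>(h, n). cutoff X h n) ` P" and x: "x \<in> W0"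
    and gx: "indicator (topspace X) x - 1/2 < g x"
    using approx W0(2,3) unfolding approximates_below_def by blast
  then obtain h n where hn: "(h, n) \<in> P" and g: "g = cutoff X h n"
    by auto
  have "x \<in> topspace X"
    using x cozero_set_subset_topspace[OF W0(2)] by blast
  with gx g have "0 < min 1 (real n * max 0 (h x))"
    by (simp add: cutoff_def)
  with \<open>x \<in> topspace X\<close> have "x \<in> cozero X h"
    by (auto simp: cozero_def zero_less_mult_iff)
  with x have meet: "\<not> disjnt (cozero X h) W0"
    by (auto simp: disjnt_def)
  then have "cozero X h \<in> \<W>"
    using hn P W0(1) by (auto simp: adapted_funs_def)
  then have "cozero X h = W0"
    using pairwiseD[OF disj _ W0(1)] meet by blast
  then show ?thesis
    using hn by force
qed

lemma ccc_cozero_if_countable_sup_property: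
  assumes csp: "countable_sup_property X"
  shows "ccc_cozero X"
  unfolding ccc_cozero_def
proof (intro allI impI)
  fix \<W> assume "(\<forall>W\<in>\<W>. cozero_set X W \<and> W \<noteq> {}) \<and> pairwise disjnt \<W>"
  then have cz: "\<And>W. W \<in> \<W> \<Longrightarrow> cozero_set X W" and ne: "\<And>W. W \<in> \<W> \<Longrightarrow> W \<noteq> {}"
    and disj: "pairwise disjnt \<W>"
    by auto
  define F where "F = (\<lambda>(h, n). cutoff X h n) ` (adapted_funs X \<W> \<times> UNIV)"
  have "is_sup_C X F (indicator (topspace X))"
    unfolding F_def using cz by (rule is_sup_C_cutoffs_adapted_funs)
  moreover have "F \<subseteq> cont_funs X"
    by (auto simp: F_def adapted_funs_def intro: cutoff_in_cont_funs)
  moreover have "(\<lambda>_. 0) \<in> adapted_funs X \<W>"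
    by (simp add: adapted_funs_def cozero_def)
  then have "F \<noteq> {}" by (auto simp: F_def)
  ultimately obtain G where "G \<subseteq> F" "countable G" and supG: "is_sup_C X G (indicator (topspace X))"
    using csp unfolding countable_sup_property_def by blast
  then obtain P where "countable P" and P: "P \<subseteq> adapted_funs X \<W> \<times> UNIV"
    and GP: "G = (\<lambda>(h, n). cutoff X h n) ` P"
    using countable_subset_image[of G "\<lambda>(h, n). cutoff X h n" "adapted_funs X \<W> \<times> UNIV"]
    unfolding F_def by blast
  have approx: "approximates_below X ((\<lambda>(h, n). cutoff X h n) ` P) (indicator (topspace X))"
    using is_sup_C_approximates_below[OF supG] by (simp add: GP)
  have "\<W> \<subseteq> (\<lambda>p. cozero X (fst p)) ` P"
  proof
    fix W assume "W \<in> \<W>"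
    then show "W \<in> (\<lambda>p. cozero X (fst p)) ` P"
      using approximating_adapted_cutoffs_generate[OF disj _ cz ne P approx] by blast
  qed
  moreover have "countable ((\<lambda>p. cozero X (fst p)) ` P)"
    using \<open>countable P\<close> by simp
  ultimately show "countable \<W>"
    by (rule countable_subset)
qed

lemma countable_sup_property_iff_ccc_cozero: "countable_sup_property X \<longleftrightarrow> ccc_cozero X"
  using countable_sup_property_if_ccc_cozero ccc_cozero_if_countable_sup_property by blast

lemma calibre_aleph1_indexed:
  assumes cal: "calibre_aleph1 Y" and unc: "uncountable I"
    and U: "\<And>i. i \<in> I \<Longrightarrow> openin Y (U i) \<and> U i \<noteq> {}"
  shows "\<exists>J\<subseteq>I. uncountable J \<and> (\<exists>a\<in>topspace Y. \<forall>i\<in>J. a \<in> U i)"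
proof -
  have "\<exists>J\<subseteq>I. uncountable J \<and> (\<Inter>i\<in>J. U i) \<noteq> {}"
  proof (cases "countable (U ` I)")
    case True
    have "I = (\<Union>W\<in>U ` I. {i \<in> I. U i = W})" by auto
    with unc have "\<not> (\<forall>W\<in>U ` I. countable {i \<in> I. U i = W})"
      using countable_UN[OF True, of "\<lambda>W. {i \<in> I. U i = W}"] by auto
    then obtain W where W: "W \<in> U ` I" and "uncountable {i \<in> I. U i = W}"
      by blast
    moreover have "(\<Inter>i\<in>{i \<in> I. U i = W}. U i) = W" "W \<noteq> {}"
      using W U by auto
    ultimately show ?thesis
      by (intro exI[of _ "{i \<in> I. U i = W}"]) auto
  next
    case False
    moreover have "U ` I \<subseteq> {V. openin Y V \<and> V \<noteq> {}}"
      using U by auto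
    ultimately have "\<exists>\<V>\<subseteq>U ` I. uncountable \<V> \<and> \<Inter>\<V> \<noteq> {}"
      using cal unfolding calibre_aleph1_def by blast
    then obtain \<V> where \<V>: "\<V> \<subseteq> U ` I" "uncountable \<V>" "\<Inter>\<V> \<noteq> {}"
      by auto
    define J where "J = {i \<in> I. U i \<in> \<V>}"
    have "U ` J = \<V>" using \<V>(1) by (auto simp: J_def)
    then have "uncountable J" "(\<Inter>i\<in>J. U i) = \<Inter>\<V>"
      using \<V>(2) countable_image by auto
    with \<V>(3) show ?thesis
      by (intro exI[of _ J]) (auto simp: J_def)
  qed
  then obtain J a where J: "J \<subseteq> I" "uncountable J" and a: "\<forall>i\<in>J. a \<in> U i"
    by auto
  obtain i where "i \<in> J" using J(2) countable_empty by (metis ex_in_conv)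
  then have "a \<in> topspace Y" using a J(1) U openin_subset by blast
  with J a show ?thesis by blast
qed

lemma uncountable_subfamily_disjoint_supports:
  assumes unc: "uncountable I" and fin: "\<And>i. i \<in> I \<Longrightarrow> finite (S i)"
    and cnt: "\<And>l. countable {i \<in> I. l \<in> S i}"
  shows "\<exists>M\<subseteq>I. uncountable M \<and> pairwise (\<lambda>i j. disjnt (S i) (S j)) M"
proof -
  have "symp (\<lambda>i j. disjnt (S i) (S j))"
    by (rule sympI) (rule disjnt_sym)
  then obtain M where M: "M \<subseteq> I" "pairwise (\<lambda>i j. disjnt (S i) (S j)) M"
    and max: "\<forall>z\<in>I - M. \<exists>y\<in>M. \<not> disjnt (S z) (S y)"
    using maximal_pairwise_subset by blast
  have "uncountable M"
  proof
    assume "countable M"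
    text \<open>By maximality every member of \<open>I\<close> lies in \<open>M\<close> or shares a coordinate with one of
      its countably many finite supports.\<close>
    define B where "B = M \<union> (\<Union>l\<in>(\<Union>j\<in>M. S j). {i \<in> I. l \<in> S i})"
    have "countable (\<Union>j\<in>M. S j)"
      using \<open>countable M\<close> M(1) fin by (intro countable_UN) (auto intro: countable_finite)
    then have "countable B"
      using \<open>countable M\<close> cnt unfolding B_def by blast
    have "I \<subseteq> B"
    proof
      fix z assume "z \<in> I"
      show "z \<in> B"
      proof (cases "z \<in> M")
        case False
        then obtain y l where "y \<in> M" "l \<in> S z" "l \<in> S y"
          using max \<open>z \<in> I\<close> unfolding disjnt_def by blast
        then show ?thesis using \<open>z \<in> I\<close> unfolding B_def by blast
      qed (simp add: B_def)
    qed
    with \<open>countable B\<close> unc show False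
      using countable_subset by blast
  qed
  with M show ?thesis by blast
qed

lemma common_point_disjoint_supports:
  assumes ne: "\<And>l. l \<in> L \<Longrightarrow> topspace (X l) \<noteq> {}"
    and SL: "\<And>i. i \<in> M \<Longrightarrow> S i \<subseteq> L"
    and disj: "pairwise (\<lambda>i j. disjnt (S i) (S j)) M"
    and V: "\<And>i l. i \<in> M \<Longrightarrow> l \<in> S i \<Longrightarrow> openin (X l) (V i l) \<and> V i l \<noteq> {}"
  shows "\<exists>q. (\<forall>l\<in>L. q l \<in> topspace (X l)) \<and> (\<forall>i\<in>M. \<forall>l\<in>S i. q l \<in> V i l)"
proof -
  have "\<exists>x\<in>topspace (X l). \<forall>i\<in>M. l \<in> S i \<longrightarrow> x \<in> V i l" if "l \<in> L" for l
  proof (cases "\<exists>i\<in>M. l \<in> S i")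
    case True
    then obtain i x where i: "i \<in> M" "l \<in> S i" and x: "x \<in> V i l"
      using V by blast
    have "j = i" if "j \<in> M" "l \<in> S j" for j
      using pairwiseD[OF disj] i that by (auto simp: disjnt_def)
    moreover have "x \<in> topspace (X l)"
      using x V[OF i] openin_subset by blast
    ultimately show ?thesis using x by blast
  next
    case False
    then show ?thesis using ne[OF that] by blast
  qed
  then obtain q where "\<forall>l\<in>L. q l \<in> topspace (X l) \<and> (\<forall>i\<in>M. l \<in> S i \<longrightarrow> q l \<in> V i l)"
    by metis
  with SL show ?thesis by blast
qed

lemma common_point_countable_overlaps:
  assumes ne: "\<And>l. l \<in> L \<Longrightarrow> topspace (X l) \<noteq> {}" and unc: "uncountable I"
    and S: "\<And>i. i \<in> I \<Longrightarrow> finite (S i) \<and> S i \<subseteq> L"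
    and V: "\<And>i l. i \<in> I \<Longrightarrow> l \<in> S i \<Longrightarrow> openin (X l) (V i l) \<and> V i l \<noteq> {}"
    and cnt: "\<And>l. countable {i \<in> I. l \<in> S i}"
  shows "\<exists>J\<subseteq>I. uncountable J \<and>
           (\<exists>q. (\<forall>l\<in>L. q l \<in> topspace (X l)) \<and> (\<forall>i\<in>J. \<forall>l\<in>S i. q l \<in> V i l))"
proof -
  have "\<exists>M\<subseteq>I. uncountable M \<and> pairwise (\<lambda>i j. disjnt (S i) (S j)) M"
    using S cnt by (intro uncountable_subfamily_disjoint_supports[OF unc]) auto
  then obtain M where M: "M \<subseteq> I" "uncountable M" "pairwise (\<lambda>i j. disjnt (S i) (S j)) M"
    by auto
  have "\<exists>q. (\<forall>l\<in>L. q l \<in> topspace (X l)) \<and> (\<forall>i\<in>M. \<forall>l\<in>S i. q l \<in> V i l)"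
    using M(1) S V by (intro common_point_disjoint_supports[OF ne _ M(3)]) auto
  with M(1,2) show ?thesis by auto
qed

lemma calibre_aleph1_common_point_bounded:
  assumes cal: "\<And>l. l \<in> L \<Longrightarrow> calibre_aleph1 (X l)" and ne: "\<And>l. l \<in> L \<Longrightarrow> topspace (X l) \<noteq> {}"
  shows "\<lbrakk>uncountable I; \<And>i. i \<in> I \<Longrightarrow> finite (S i) \<and> card (S i) \<le> n \<and> S i \<subseteq> L;
          \<And>i l. i \<in> I \<Longrightarrow> l \<in> S i \<Longrightarrow> openin (X l) (V i l) \<and> V i l \<noteq> {}\<rbrakk>
         \<Longrightarrow> \<exists>J\<subseteq>I. uncountable J \<and>
               (\<exists>q. (\<forall>l\<in>L. q l \<in> topspace (X l)) \<and> (\<forall>i\<in>J. \<forall>l\<in>S i. q l \<in> V i l))"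
proof (induction n arbitrary: I S)
  case 0
  then have "{i \<in> I. l \<in> S i} = {}" for l
    using card_0_eq by blast
  then have "countable {i \<in> I. l \<in> S i}" for l
    by (metis countable_empty)
  then show ?case
    using 0 by (intro common_point_countable_overlaps[OF ne]) auto
next
  case (Suc n)
  show ?case
  proof (cases "\<exists>l. uncountable {i \<in> I. l \<in> S i}")
    case True
    text \<open>A coordinate shared by uncountably many supports is fixed by the calibre of its factor.\<close>
    then obtain l where l: "uncountable {i \<in> I. l \<in> S i}" by blast
    then obtain i1 where "i1 \<in> I" "l \<in> S i1"
      using countable_empty by (metis (no_types, lifting) Collect_empty_eq)
    then have "l \<in> L" using Suc.prems(2) by blast
    have "\<exists>J\<subseteq>{i \<in> I. l \<in> S i}. uncountable J \<and> (\<exists>a\<in>topspace (X l). \<forall>i\<in>J. a \<in> V i l)"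
      using Suc.prems(3) by (intro calibre_aleph1_indexed[OF cal[OF \<open>l \<in> L\<close>] l]) auto
    then obtain J1 a where J1: "J1 \<subseteq> {i \<in> I. l \<in> S i}" "uncountable J1"
      and a: "a \<in> topspace (X l)" "\<forall>i\<in>J1. a \<in> V i l"
      by auto
    have "\<exists>J\<subseteq>J1. uncountable J \<and>
        (\<exists>q. (\<forall>l\<in>L. q l \<in> topspace (X l)) \<and> (\<forall>i\<in>J. \<forall>l'\<in>S i - {l}. q l' \<in> V i l'))"
    proof (rule Suc.IH[OF J1(2)])
      fix i assume "i \<in> J1"
      then have "i \<in> I" "l \<in> S i" using J1(1) by auto
      then show "finite (S i - {l}) \<and> card (S i - {l}) \<le> n \<and> S i - {l} \<subseteq> L"
        using Suc.prems(2)[of i] by auto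
      show "openin (X l') (V i l') \<and> V i l' \<noteq> {}" if "l' \<in> S i - {l}" for l'
        using Suc.prems(3) \<open>i \<in> I\<close> that by blast
    qed
    then obtain J q where J: "J \<subseteq> J1" "uncountable J" and q: "\<forall>l\<in>L. q l \<in> topspace (X l)"
      and qV: "\<forall>i\<in>J. \<forall>l'\<in>S i - {l}. q l' \<in> V i l'"
      by auto
    have "\<forall>l'\<in>L. (q(l := a)) l' \<in> topspace (X l')" "\<forall>i\<in>J. \<forall>l'\<in>S i. (q(l := a)) l' \<in> V i l'"
      using q qV a J(1) by auto
    with J J1(1) show ?thesis by blast
  next
    case False
    then show ?thesis
      using Suc.prems by (intro common_point_countable_overlaps[OF ne]) auto
  qed
qed

lemma calibre_aleph1_common_point_boxes:
  assumes cal: "\<And>l. l \<in> L \<Longrightarrow> calibre_aleph1 (X l)" and ne: "\<And>l. l \<in> L \<Longrightarrow> topspace (X l) \<noteq> {}"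
    and unc: "uncountable I" and fin: "\<And>i. i \<in> I \<Longrightarrow> finite {l \<in> L. U i l \<noteq> topspace (X l)}"
    and U: "\<And>i l. i \<in> I \<Longrightarrow> l \<in> L \<Longrightarrow> openin (X l) (U i l) \<and> U i l \<noteq> {}"
  shows "\<exists>J\<subseteq>I. uncountable J \<and>
           (\<exists>q. (\<forall>l\<in>L. q l \<in> topspace (X l)) \<and> (\<forall>i\<in>J. \<forall>l\<in>L. q l \<in> U i l))"
proof -
  define S where "S i = {l \<in> L. U i l \<noteq> topspace (X l)}" for i
  have "I = (\<Union>n. {i \<in> I. card (S i) \<le> n})" by auto
  moreover have "countable (\<Union>n. {i \<in> I. card (S i) \<le> n})"
    if "\<forall>n. countable {i \<in> I. card (S i) \<le> n}"
    using that by (intro countable_UN) auto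
  ultimately obtain n where n: "uncountable {i \<in> I. card (S i) \<le> n}"
    using unc by auto
  have "\<exists>J\<subseteq>{i \<in> I. card (S i) \<le> n}. uncountable J \<and>
      (\<exists>q. (\<forall>l\<in>L. q l \<in> topspace (X l)) \<and> (\<forall>i\<in>J. \<forall>l\<in>S i. q l \<in> U i l))"
    using fin U by (intro calibre_aleph1_common_point_bounded[OF cal ne n]) (auto simp: S_def)
  then obtain J q where J: "J \<subseteq> I" "uncountable J" and q: "\<forall>l\<in>L. q l \<in> topspace (X l)"
    and qU: "\<forall>i\<in>J. \<forall>l\<in>S i. q l \<in> U i l"
    by auto
  have "\<forall>i\<in>J. \<forall>l\<in>L. q l \<in> U i l"
    using q qU by (auto simp: S_def)
  with J q show ?thesis
    by (intro exI[of _ J] conjI exI[of _ q]) auto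
qed

lemma continuous_map_insert_coordinate:
  assumes "\<And>l. l \<in> \<Lambda> - {l0} \<Longrightarrow> q l \<in> topspace (X l)"
  shows "continuous_map (X l0) (product_topology X \<Lambda>) (\<lambda>x. restrict (q(l0 := x)) \<Lambda>)"
  unfolding continuous_map_componentwise
proof (intro conjI ballI)
  fix k assume "k \<in> \<Lambda>"
  then show "continuous_map (X l0) (X k) (\<lambda>x. restrict (q(l0 := x)) \<Lambda> k)"
    using assms by (cases "k = l0") auto
qed auto

lemma ccc_cozero_pullback_countable:
  assumes ccc: "ccc_cozero X" and f: "continuous_map X Y f"
    and cz: "\<And>W. W \<in> \<W> \<Longrightarrow> cozero_set Y W" and disj: "pairwise disjnt \<W>"
    and hit: "\<And>W. W \<in> \<W> \<Longrightarrow> \<exists>x\<in>topspace X. f x \<in> W"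
  shows "countable \<W>"
proof -
  define T where "T W = {x \<in> topspace X. f x \<in> W}" for W
  have T_ne: "T W \<noteq> {}" if "W \<in> \<W>" for W
    using hit[OF that] by (auto simp: T_def)
  have T_disj: "disjnt (T W) (T W')" if "W \<in> \<W>" "W' \<in> \<W>" "W \<noteq> W'" for W W'
    using pairwiseD[OF disj that] by (auto simp: T_def disjnt_def)
  have "inj_on T \<W>"
    using T_ne T_disj by (metis disjnt_self_iff_empty inj_onI)
  moreover have "countable (T ` \<W>)"
  proof -
    have "\<forall>A\<in>T ` \<W>. cozero_set X A \<and> A \<noteq> {}"
      using cozero_set_preimage[OF f cz] T_ne by (auto simp: T_def)
    moreover have "pairwise disjnt (T ` \<W>)"
      using T_disj by (auto intro: pairwise_imageI)
    ultimately show ?thesis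
      using ccc unfolding ccc_cozero_def by blast
  qed
  ultimately show ?thesis
    using countable_image_inj_on by blast
qed

lemma openin_product_topology_contains_box:
  assumes "openin (product_topology X \<Lambda>) W" and "W \<noteq> {}"
  shows "\<exists>U. finite {l \<in> \<Lambda>. U l \<noteq> topspace (X l)} \<and> (\<forall>l\<in>\<Lambda>. openin (X l) (U l) \<and> U l \<noteq> {}) \<and>
      Pi\<^sub>E \<Lambda> U \<subseteq> W"
proof -
  obtain p where "p \<in> W" using assms(2) by blast
  with assms(1) obtain U where "finite {l \<in> \<Lambda>. U l \<noteq> topspace (X l)}" "\<forall>l\<in>\<Lambda>. openin (X l) (U l)"
    "p \<in> Pi\<^sub>E \<Lambda> U" "Pi\<^sub>E \<Lambda> U \<subseteq> W"
    unfolding openin_product_topology_alt by blast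
  then show ?thesis
    by (intro exI[of _ U]) (auto simp: PiE_iff)
qed

lemma ccc_cozero_product_topology:
  assumes l0: "l0 \<in> \<Lambda>" and ccc: "ccc_cozero (X l0)" and cal: "\<And>l. l \<in> \<Lambda> - {l0} \<Longrightarrow> calibre_aleph1 (X l)"
  shows "ccc_cozero (product_topology X \<Lambda>)"
  unfolding ccc_cozero_def
proof (intro allI impI, rule ccontr)
  fix \<W> assume "(\<forall>W\<in>\<W>. cozero_set (product_topology X \<Lambda>) W \<and> W \<noteq> {}) \<and> pairwise disjnt \<W>"
    and unc: "uncountable \<W>"
  then have cz: "\<And>W. W \<in> \<W> \<Longrightarrow> cozero_set (product_topology X \<Lambda>) W"
    and disj: "pairwise disjnt \<W>"
    and "\<forall>W\<in>\<W>. \<exists>U. finite {l \<in> \<Lambda>. U l \<noteq> topspace (X l)} \<and>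
      (\<forall>l\<in>\<Lambda>. openin (X l) (U l) \<and> U l \<noteq> {}) \<and> Pi\<^sub>E \<Lambda> U \<subseteq> W"
    by (auto intro: openin_product_topology_contains_box openin_cozero_set)
  from bchoice[OF this(3)] obtain U where "\<forall>W\<in>\<W>. finite {l \<in> \<Lambda>. U W l \<noteq> topspace (X l)} \<and>
      (\<forall>l\<in>\<Lambda>. openin (X l) (U W l) \<and> U W l \<noteq> {}) \<and> Pi\<^sub>E \<Lambda> (U W) \<subseteq> W" ..
  then have U_fin: "\<And>W. W \<in> \<W> \<Longrightarrow> finite {l \<in> \<Lambda> - {l0}. U W l \<noteq> topspace (X l)}"
    and U_open: "\<And>W l. W \<in> \<W> \<Longrightarrow> l \<in> \<Lambda> \<Longrightarrow> openin (X l) (U W l) \<and> U W l \<noteq> {}"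
    and U_sub: "\<And>W. W \<in> \<W> \<Longrightarrow> Pi\<^sub>E \<Lambda> (U W) \<subseteq> W"
    by (auto intro: finite_subset[rotated])
  obtain W1 where "W1 \<in> \<W>" using unc by (metis countable_empty ex_in_conv)
  then have ne_top: "\<And>l. l \<in> \<Lambda> - {l0} \<Longrightarrow> topspace (X l) \<noteq> {}"
    using U_open openin_subset by blast
  have "\<exists>J\<subseteq>\<W>. uncountable J \<and>
      (\<exists>q. (\<forall>l\<in>\<Lambda> - {l0}. q l \<in> topspace (X l)) \<and> (\<forall>W\<in>J. \<forall>l\<in>\<Lambda> - {l0}. q l \<in> U W l))"
    using U_fin U_open by (intro calibre_aleph1_common_point_boxes[OF cal ne_top unc]) auto
  then obtain J q where J: "J \<subseteq> \<W>" "uncountable J" and q: "\<forall>l\<in>\<Lambda> - {l0}. q l \<in> topspace (X l)"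
    and qU: "\<forall>W\<in>J. \<forall>l\<in>\<Lambda> - {l0}. q l \<in> U W l"
    by auto
  text \<open>Freezing the coordinates off \<open>l0\<close> at \<open>q\<close> meets every member of \<open>J\<close> in a nonempty set.\<close>
  have "countable J"
  proof (rule ccc_cozero_pullback_countable[OF ccc continuous_map_insert_coordinate[of \<Lambda> l0 q X, OF q[rule_format]]])
    show "pairwise disjnt J" using disj J(1) by (rule pairwise_subset)
    fix W assume W: "W \<in> J"
    then show "cozero_set (product_topology X \<Lambda>) W" using cz J(1) by blast
    have "W \<in> \<W>" using W J(1) by blast
    obtain x where x: "x \<in> U W l0" using U_open[OF \<open>W \<in> \<W>\<close> l0] by blast
    then have "x \<in> topspace (X l0)" using U_open[OF \<open>W \<in> \<W>\<close> l0] openin_subset by blast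
    moreover have "restrict (q(l0 := x)) \<Lambda> \<in> Pi\<^sub>E \<Lambda> (U W)"
      using x qU W by (auto simp: restrict_PiE_iff)
    ultimately show "\<exists>x\<in>topspace (X l0). restrict (q(l0 := x)) \<Lambda> \<in> W"
      using U_sub[OF \<open>W \<in> \<W>\<close>] by blast
  qed
  with J(2) show False by blast
qed

theorem corollary6p5:
  fixes X :: "'i \<Rightarrow> 'a topology" and \<Lambda> :: "'i set" and l0 :: 'i
  assumes "l0 \<in> \<Lambda>"
    and "countable_sup_property (X l0)"
    and "\<forall>l\<in>\<Lambda> - {l0}. calibre_aleph1 (X l)"
  shows "countable_sup_property (product_topology X \<Lambda>)"
proof -
  have "ccc_cozero (X l0)"
    using assms(2) by (simp add: countable_sup_property_iff_ccc_cozero)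
  then have "ccc_cozero (product_topology X \<Lambda>)"
    using assms(1,3) by (intro ccc_cozero_product_topology) auto
  then show ?thesis
    by (simp add: countable_sup_property_iff_ccc_cozero)
qed

end
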